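(* Fix an input $x\in\mathcal{X}$, parameters $\theta$, and an integer $N\ge 1$. Let $m_\theta(\cdot\mid x)$ be a parametric distribution over a latent space $\mathcal{Z}$, $f:\mathcal{Z}\to\mathcal{Y}$ a deterministic decoding map, and $y^\ast(x)\in\mathcal{Y}$ the correct answer, with pass rate $p=\mathbb{E}_{z\sim m_\theta(\cdot\mid x)}[\mathbb{I}\{f(z)=y^\ast(x)\}]$. Draw $z_1,\dots,z_N$ i.i.d. from $m_\theta(\cdot\mid x)$, and set $r_i=\mathbb{I}\{f(z_i)=y^\ast(x)\}$, $S_i=\nabla_\theta\log m_\theta(z_i\mid x)$, and $K=\sum_{i=1}^N r_i$. Define the estimator $$\widehat g_N(x)=\begin{cases}\dfrac{1}{K}\sum_{i=1}^N r_iS_i, & K\ge 1,\\[4pt] 0, & K=0.\end{cases}$$ For $T\in\mathbb{N}$ define the truncated objective $J^{(T)}_{\mathrm{MaxRL}}(x)=-\sum_{k=1}^{T}\frac{(1-p)^k}{k}$. Then $$\mathbb{E}\big[\widehat g_N(x)\big]=\nabla_\theta J^{(N)}_{\mathrm{MaxRL}}(x)=\sum_{k=1}^{N}\frac{1}{k}\nabla_\theta\,\mathrm{pass@}k(x),$$ where $\mathrm{pass@}k(x)=1-(1-p)^k$ is the probability that at least one of $k$ i.i.d. samples from $m_\theta(\cdot\mid x)$ decodes to $y^\ast(x)$.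
   Context: $\mathcal{X},\mathcal{Y}$ are input and output spaces, $\theta$ a real parameter vector, $\mathbb{I}\{\cdot\}$ the indicator function. The pass rate $p$ is assumed positive, $m_\theta(z\mid x)$ is differentiable in $\theta$, and gradients may be interchanged with expectations over $z$ (score-function identity). The expectation of $\widehat g_N(x)$ is over the $N$ i.i.d. samples. *)

theory Defs
  imports "HOL-Probability.Probability"
begin

definition ghat :: "nat \<Rightarrow> ('z \<Rightarrow> 'y) \<Rightarrow> 'y \<Rightarrow> ('z \<Rightarrow> 'p::real_vector) \<Rightarrow> (nat \<Rightarrow> 'z) \<Rightarrow> 'p" where
  "ghat N f ystar S zs =
     (let K = (\<Sum>i<N. of_bool (f (zs i) = ystar) :: real)
      in if K \<ge> 1 then (1 / K) *\<^sub>R (\<Sum>i<N. of_bool (f (zs i) = ystar) *\<^sub>R S (zs i)) else 0)"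

definition J_trunc :: "nat \<Rightarrow> real \<Rightarrow> real" where
  "J_trunc T p = - (\<Sum>k=1..T. (1 - p) ^ k / real k)"

definition pass_at :: "nat \<Rightarrow> real \<Rightarrow> real" where
  "pass_at k p = 1 - (1 - p) ^ k"

end

theory Submission
  imports Defs
begin

text \<open>
  Let T be the random set of indices of the successful samples. Summing over all candidates
  S for T, \<open>ghat = (\<Sum>S. \<Sum>i\<in>S. [T = S] s(z\<^sub>i) / |S|)\<close>, and \<open>[T = S] s(z\<^sub>i)\<close> is a
  product of one-sample factors: \<open>r s\<close> at i, \<open>r\<close> on the rest of S and \<open>1 - r\<close> off S.
  By independence its expectation is \<open>\<nabla>p \<cdot> p^(|S|-1) (1-p)^(N-|S|)\<close> with \<open>\<nabla>p = E[r s]\<close>,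
  and summing these binomial weights gives \<open>E[ghat] = (\<Sum>k<N. (1-p)^k) \<nabla>p\<close>. The chain rule
  yields the same vector from \<open>J_trunc N\<close> and, as \<open>pass_at k\<close> has derivative \<open>k (1-p)^(k-1)\<close>,
  from the pass@k sum.
\<close>

lemma binomial_ring_Pow:
  fixes a b :: "'a::comm_semiring_1"
  assumes "finite I"
  shows "(\<Sum>S\<in>Pow I. a ^ card S * b ^ (card I - card S)) = (a + b) ^ card I"
proof -
  have "(a + b) ^ card I = (\<Prod>_\<in>I. a + b)" by simp
  also have "\<dots> = (\<Sum>S\<in>Pow I. (\<Prod>_\<in>S. a) * (\<Prod>_\<in>I - S. b))"
    by (rule prod_add[OF assms])
  also have "\<dots> = (\<Sum>S\<in>Pow I. a ^ card S * b ^ (card I - card S))"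
    using assms by (intro sum.cong refl) (auto simp: card_Diff_subset finite_subset)
  finally show ?thesis ..
qed

lemma sum_Pow_binomial_weights_div_card:
  fixes c p :: real
  assumes "finite I" and "p \<noteq> 0"
  shows "(\<Sum>S\<in>Pow I. \<Sum>i\<in>S. c * p ^ (card S - 1) * (1 - p) ^ (card I - card S) / card S)
    = (\<Sum>k<card I. (1 - p) ^ k) * c"
proof -
  have "p * (\<Sum>i\<in>S. c * p ^ (card S - 1) * (1 - p) ^ (card I - card S) / card S)
      = c * (p ^ card S * (1 - p) ^ (card I - card S) - of_bool (S = {}) * (1 - p) ^ card I)"
    if "S \<in> Pow I" for S
  proof (cases "S = {}")
    case False
    with that assms(1) have "card S > 0" by (auto simp: card_gt_0_iff finite_subset)
    then show ?thesis using False by (cases "card S") auto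
  qed simp
  then have "p * (\<Sum>S\<in>Pow I. \<Sum>i\<in>S. c * p ^ (card S - 1) * (1 - p) ^ (card I - card S) / card S)
      = c * (\<Sum>S\<in>Pow I. p ^ card S * (1 - p) ^ (card I - card S) - of_bool (S = {}) * (1 - p) ^ card I)"
    by (simp add: sum_distrib_left)
  also have "\<dots> = c * ((\<Sum>S\<in>Pow I. p ^ card S * (1 - p) ^ (card I - card S)) - (1 - p) ^ card I)"
    using assms(1) by (simp add: sum_subtractf if_distrib sum.delta)
  also have "\<dots> = p * ((\<Sum>k<card I. (1 - p) ^ k) * c)"
    using one_diff_power_eq[of "1 - p" "card I"] by (simp add: binomial_ring_Pow[OF assms(1)])
  finally show ?thesis using assms(2) by simp
qed

lemma prod_if_eq_if_mem_power:
  assumes "finite I" and "S \<subseteq> I" and "i \<in> S"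
  shows "(\<Prod>j\<in>I. if j = i then a else if j \<in> S then b else c)
    = (a::'a::comm_monoid_mult) * b ^ (card S - 1) * c ^ (card I - card S)"
proof -
  have "finite S" using assms finite_subset by blast
  have "(\<Prod>j\<in>I. if j = i then a else if j \<in> S then b else c)
      = (\<Prod>j\<in>I - S. if j = i then a else if j \<in> S then b else c)
        * (\<Prod>j\<in>S. if j = i then a else if j \<in> S then b else c)"
    using assms by (intro prod.subset_diff) auto
  also have "(\<Prod>j\<in>I - S. if j = i then a else if j \<in> S then b else c) = (\<Prod>j\<in>I - S. c)"
    using assms by (intro prod.cong) auto
  also have "\<dots> = c ^ (card I - card S)"
    using assms \<open>finite S\<close> by (simp add: card_Diff_subset)
  also have "(\<Prod>j\<in>S. if j = i then a else if j \<in> S then b else c) = a * b ^ (card S - 1)"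
    using assms \<open>finite S\<close> by (simp add: prod.remove[of S i])
  finally show ?thesis by (simp add: ac_simps)
qed

definition success_pattern_factor ::
    "nat set \<Rightarrow> nat \<Rightarrow> ('z \<Rightarrow> real) \<Rightarrow> ('z \<Rightarrow> real) \<Rightarrow> nat \<Rightarrow> 'z \<Rightarrow> real" where
  "success_pattern_factor S i r v j z = (if j = i then r z * v z else if j \<in> S then r z else 1 - r z)"

lemma prod_success_pattern_factor:
  fixes r :: "'z \<Rightarrow> real"
  assumes "\<And>j. j \<in> I \<Longrightarrow> r (\<omega> j) \<in> {0, 1}" and "finite I" and "S \<subseteq> I" and "i \<in> S"
  shows "(\<Prod>j\<in>I. success_pattern_factor S i r v j (\<omega> j))
    = of_bool (S = {j \<in> I. r (\<omega> j) = 1}) * v (\<omega> i)"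
proof (cases "S = {j \<in> I. r (\<omega> j) = 1}")
  case True
  have "(\<Prod>j\<in>I. success_pattern_factor S i r v j (\<omega> j)) = (\<Prod>j\<in>I. if j = i then v (\<omega> i) else 1)"
    using assms True by (intro prod.cong) (auto simp: success_pattern_factor_def)
  then show ?thesis using assms True by (simp add: prod.delta)
next
  case False
  then obtain j where "j \<in> I" and "(j \<in> S) \<noteq> (r (\<omega> j) = 1)"
    using assms(3) by blast
  then have "success_pattern_factor S i r v j (\<omega> j) = 0"
    using assms(1,4) by (force simp: success_pattern_factor_def)
  then have "(\<Prod>j\<in>I. success_pattern_factor S i r v j (\<omega> j)) = 0"
    using \<open>j \<in> I\<close> assms(2) by (intro prod_zero bexI[of _ j])
  then show ?thesis using False by simp
qed

lemma ghat_inner_eq_sum_success_patterns: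
  fixes f :: "'z \<Rightarrow> 'y" and y :: 'y and s :: "'z \<Rightarrow> 'p::real_inner"
  defines "r \<equiv> \<lambda>z. of_bool (f z = y)"
  shows "ghat N f y s \<omega> \<bullet> b = (\<Sum>S\<in>Pow {..<N}. \<Sum>i\<in>S.
    (\<Prod>j<N. success_pattern_factor S i r (\<lambda>z. s z \<bullet> b) j (\<omega> j)) / card S)"
proof -
  define T where "T = {j \<in> {..<N}. r (\<omega> j) = 1}"
  have "T \<in> Pow {..<N}" by (auto simp: T_def)
  have pattern: "(\<Prod>j<N. success_pattern_factor S i r (\<lambda>z. s z \<bullet> b) j (\<omega> j))
      = of_bool (S = T) * (s (\<omega> i) \<bullet> b)" if "S \<subseteq> {..<N}" and "i \<in> S" for S i
    unfolding T_def using that by (intro prod_success_pattern_factor) (auto simp: r_def)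
  have "(\<Sum>S\<in>Pow {..<N}. \<Sum>i\<in>S. (\<Prod>j<N. success_pattern_factor S i r (\<lambda>z. s z \<bullet> b) j (\<omega> j)) / card S)
      = (\<Sum>S\<in>Pow {..<N}. if S = T then (\<Sum>i\<in>S. s (\<omega> i) \<bullet> b / card S) else 0)"
    by (intro sum.cong refl) (auto simp: pattern)
  also have "\<dots> = (\<Sum>i\<in>T. s (\<omega> i) \<bullet> b) / card T"
    using \<open>T \<in> Pow {..<N}\<close> by (simp add: sum.delta sum_divide_distrib)
  also have "\<dots> = ghat N f y s \<omega> \<bullet> b"
  proof -
    have "T = {i \<in> {..<N}. f (\<omega> i) = y}" by (simp add: T_def r_def)
    then show ?thesis
      by (simp add: ghat_def Let_def sum_of_bool_eq inner_sum_left sum.inter_filter Int_def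
          card_gt_0_iff Suc_le_eq)
  qed
  finally show ?thesis ..
qed

lemma has_bochner_integral_componentwise:
  fixes F :: "'a \<Rightarrow> 'p::euclidean_space"
  assumes "\<And>b. b \<in> Basis \<Longrightarrow> has_bochner_integral M (\<lambda>x. F x \<bullet> b) (c \<bullet> b)"
  shows "has_bochner_integral M F c"
proof -
  have "has_bochner_integral M (\<lambda>x. \<Sum>b\<in>Basis. (F x \<bullet> b) *\<^sub>R b) (\<Sum>b\<in>Basis. (c \<bullet> b) *\<^sub>R b)"
    using assms by (intro has_bochner_integral_sum has_bochner_integral_scaleR_left)
  then show ?thesis by (simp add: euclidean_representation)
qed

lemma (in prob_space) has_bochner_integral_prod_success_pattern_factor:
  assumes "integrable M r" and "integrable M (\<lambda>z. r z * v z)"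
    and "finite I" and "S \<subseteq> I" and "i \<in> S"
  shows "has_bochner_integral (PiM I (\<lambda>_. M)) (\<lambda>\<omega>. \<Prod>j\<in>I. success_pattern_factor S i r v j (\<omega> j))
    ((\<integral>z. r z * v z \<partial>M) * expectation r ^ (card S - 1) * (1 - expectation r) ^ (card I - card S))"
proof -
  interpret product_sigma_finite "\<lambda>_. M"
    by (simp add: product_sigma_finite_def sigma_finite_measure_axioms)
  have factor_eq: "success_pattern_factor S i r v j
      = (if j = i then (\<lambda>z. r z * v z) else if j \<in> S then r else (\<lambda>z. 1 - r z))" for j
    by (auto simp: fun_eq_iff success_pattern_factor_def)
  have factor_integrable: "integrable M (success_pattern_factor S i r v j)" for j
    using assms(1,2) by (simp add: factor_eq)
  have factor_integral: "integral\<^sup>L M (success_pattern_factor S i r v j)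
      = (if j = i then \<integral>z. r z * v z \<partial>M else if j \<in> S then expectation r else 1 - expectation r)" for j
    using assms(1,2) by (simp add: factor_eq prob_space)
  show ?thesis
    using assms(3-5) factor_integrable
    by (simp add: has_bochner_integral_iff product_integrable_prod product_integral_prod
        factor_integral prod_if_eq_if_mem_power)
qed

lemma (in prob_space) has_bochner_integral_ghat:
  fixes f :: "'a \<Rightarrow> 'y" and y :: 'y and s :: "'a \<Rightarrow> 'p::euclidean_space"
  defines "A \<equiv> {z \<in> space M. f z = y}"
  assumes A_events: "A \<in> events" and s_int: "integrable M (\<lambda>z. indicator A z *\<^sub>R s z)"
    and prob_nonzero: "prob A \<noteq> 0"
  shows "has_bochner_integral (PiM {..<N} (\<lambda>_. M)) (ghat N f y s)
    ((\<Sum>k<N. (1 - prob A) ^ k) *\<^sub>R (\<integral>z. indicator A z *\<^sub>R s z \<partial>M))"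
proof (rule has_bochner_integral_componentwise)
  fix b :: 'p
  define r where "r = (\<lambda>z. of_bool (f z = y) :: real)"
  define g where "g = (\<integral>z. indicator A z *\<^sub>R s z \<partial>M)"
  have r_indicator: "r z = indicator A z" if "z \<in> space M" for z
    using that by (simp add: r_def A_def)
  have rs_inner: "r z * (s z \<bullet> b) = (indicator A z *\<^sub>R s z) \<bullet> b" if "z \<in> space M" for z
    using that by (simp add: r_indicator)
  have "has_bochner_integral M r (prob A)"
    using A_events by (intro has_bochner_integral_cong[OF refl r_indicator refl, THEN iffD2]
        has_bochner_integral_real_indicator) (auto simp: less_top[symmetric])
  then have r_integrable: "integrable M r" and r_integral: "expectation r = prob A"
    by (simp_all add: has_bochner_integral_iff)
  have "has_bochner_integral M (\<lambda>z. r z * (s z \<bullet> b)) (g \<bullet> b)"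
    using s_int unfolding g_def
    by (intro has_bochner_integral_cong[OF refl rs_inner refl, THEN iffD2]
        has_bochner_integral_inner_left has_bochner_integral_integrable)
  then have rs_integrable: "integrable M (\<lambda>z. r z * (s z \<bullet> b))"
    and rs_integral: "(\<integral>z. r z * (s z \<bullet> b) \<partial>M) = g \<bullet> b"
    by (simp_all add: has_bochner_integral_iff)
  have term_integral: "has_bochner_integral (PiM {..<N} (\<lambda>_. M))
      (\<lambda>\<omega>. \<Prod>j<N. success_pattern_factor S i r (\<lambda>z. s z \<bullet> b) j (\<omega> j))
      ((g \<bullet> b) * prob A ^ (card S - 1) * (1 - prob A) ^ (N - card S))"
    if "S \<in> Pow {..<N}" and "i \<in> S" for S i
    using has_bochner_integral_prod_success_pattern_factor[OF r_integrable rs_integrable, of "{..<N}" S i]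
      that by (simp add: rs_integral r_integral)
  have "has_bochner_integral (PiM {..<N} (\<lambda>_. M))
      (\<lambda>\<omega>. \<Sum>S\<in>Pow {..<N}. \<Sum>i\<in>S. (\<Prod>j<N. success_pattern_factor S i r (\<lambda>z. s z \<bullet> b) j (\<omega> j)) / card S)
      (\<Sum>S\<in>Pow {..<N}. \<Sum>i\<in>S. (g \<bullet> b) * prob A ^ (card S - 1) * (1 - prob A) ^ (N - card S) / card S)"
    using term_integral by (intro has_bochner_integral_sum has_bochner_integral_divide_zero)
  then show "has_bochner_integral (PiM {..<N} (\<lambda>_. M)) (\<lambda>\<omega>. ghat N f y s \<omega> \<bullet> b)
      (((\<Sum>k<N. (1 - prob A) ^ k) *\<^sub>R g) \<bullet> b)"
    using sum_Pow_binomial_weights_div_card[of "{..<N}" "prob A" "g \<bullet> b"] prob_nonzero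
    by (simp add: ghat_inner_eq_sum_success_patterns r_def)
qed

lemma prob_space_density_real:
  assumes "g \<in> borel_measurable M" and "\<And>z. z \<in> space M \<Longrightarrow> 0 \<le> g z"
    and "integrable M g" and "(\<integral>z. g z \<partial>M) = 1"
  shows "prob_space (density M (\<lambda>z. ennreal (g z)))"
proof (rule prob_spaceI)
  have "emeasure (density M g) (space M) = (\<integral>\<^sup>+ z. ennreal (g z) * indicator (space M) z \<partial>M)"
    using assms(1) by (simp add: emeasure_density)
  also have "\<dots> = (\<integral>\<^sup>+ z. ennreal (g z) \<partial>M)"
    by (intro nn_integral_cong) (simp add: indicator_def)
  also have "\<dots> = ennreal (\<integral>z. g z \<partial>M)"
    using assms(2,3) by (intro nn_integral_eq_integral AE_I2) auto
  finally show "emeasure (density M g) (space (density M g)) = 1"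
    using assms(4) by simp
qed

lemma has_bochner_integral_ghat_density:
  fixes M :: "'z measure" and w :: "'z \<Rightarrow> real"
    and f :: "'z \<Rightarrow> 'y" and y :: 'y and s :: "'z \<Rightarrow> 'p::euclidean_space"
  defines "A \<equiv> {z \<in> space M. f z = y}"
  defines "p \<equiv> \<integral>z. indicator A z * w z \<partial>M"
  assumes w_meas: "w \<in> borel_measurable M" and w_nonneg: "\<And>z. z \<in> space M \<Longrightarrow> 0 \<le> w z"
    and w_int: "integrable M w" and w_norm: "(\<integral>z. w z \<partial>M) = 1"
    and A_meas: "A \<in> sets M" and s_meas: "s \<in> borel_measurable M"
    and ws_int: "integrable M (\<lambda>z. (indicator A z * w z) *\<^sub>R s z)" and p_nonzero: "p \<noteq> 0"
  shows "has_bochner_integral (PiM {..<N} (\<lambda>_. density M (\<lambda>z. ennreal (w z)))) (ghat N f y s)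
    ((\<Sum>k<N. (1 - p) ^ k) *\<^sub>R (\<integral>z. (indicator A z * w z) *\<^sub>R s z \<partial>M))"
proof -
  define Q where "Q = density M (\<lambda>z. ennreal (w z))"
  interpret Q: prob_space Q
    unfolding Q_def using w_meas w_nonneg w_int w_norm by (rule prob_space_density_real)
  have w_AE: "AE z in M. 0 \<le> w z"
    using w_nonneg by (simp add: AE_I2)
  have "Q.prob A = (\<integral>z. indicator A z \<partial>Q)"
    using A_meas sets.sets_into_space by (simp add: Q_def Int_absorb2)
  also have "\<dots> = (\<integral>z. w z *\<^sub>R indicator A z \<partial>M)"
    unfolding Q_def using A_meas w_meas w_AE by (intro integral_density) auto
  finally have "Q.prob A = p"
    by (simp add: p_def mult.commute)
  moreover have "integrable Q (\<lambda>z. indicator A z *\<^sub>R s z)"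
    unfolding Q_def using A_meas w_meas w_AE s_meas ws_int
    by (subst integrable_density) (auto simp: mult.commute)
  moreover have "(\<integral>z. indicator A z *\<^sub>R s z \<partial>Q) = (\<integral>z. (indicator A z * w z) *\<^sub>R s z \<partial>M)"
    unfolding Q_def using A_meas w_meas w_AE s_meas by (subst integral_density) (auto simp: mult.commute)
  moreover have "A = {z \<in> space Q. f z = y}"
    by (simp add: A_def Q_def)
  ultimately show ?thesis
    using Q.has_bochner_integral_ghat[of f y s N] A_meas p_nonzero by (simp add: Q_def)
qed

lemma has_real_derivative_J_trunc: "(J_trunc N has_real_derivative (\<Sum>k<N. (1 - x) ^ k)) (at x)"
proof -
  have "((\<lambda>x. (1 - x) ^ k / real k) has_real_derivative - ((1 - x) ^ (k - 1))) (at x)"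
    if "k \<in> {1..N}" for k
    using that by (auto intro!: derivative_eq_intros simp: field_simps)
  then have "((\<lambda>x. \<Sum>k=1..N. (1 - x) ^ k / real k) has_real_derivative (\<Sum>k=1..N. - ((1 - x) ^ (k - 1)))) (at x)"
    by (intro DERIV_sum)
  then have "((\<lambda>x. - (\<Sum>k=1..N. (1 - x) ^ k / real k)) has_real_derivative - (\<Sum>k=1..N. - ((1 - x) ^ (k - 1)))) (at x)"
    by (rule DERIV_minus)
  moreover have "(\<Sum>k=1..N. (1 - x) ^ (k - 1)) = (\<Sum>k<N. (1 - x) ^ k)"
    by (simp add: sum.atLeast1_atMost_eq)
  ultimately show ?thesis
    unfolding J_trunc_def by (simp only: sum_negf minus_minus)
qed

lemma has_real_derivative_pass_at: "(pass_at k has_real_derivative (real k * (1 - x) ^ (k - 1))) (at x)"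
proof -
  have "((\<lambda>x. 1 - x) has_real_derivative - 1) (at x)"
    using DERIV_diff[OF DERIV_const DERIV_ident] by simp
  from DERIV_diff[OF DERIV_const DERIV_power[OF this]]
  show ?thesis unfolding pass_at_def by simp
qed

lemma has_derivative_real_compose_inner:
  assumes "(p has_derivative (\<lambda>h. g \<bullet> h)) (at \<theta>)" and "(\<phi> has_real_derivative c) (at (p \<theta>))"
  shows "((\<lambda>t. \<phi> (p t)) has_derivative (\<lambda>h. (c *\<^sub>R g) \<bullet> h)) (at \<theta>)"
  using has_derivative_compose[OF assms(1) has_field_derivative_imp_has_derivative[OF assms(2)]]
  by (simp add: mult.commute)

theorem theorem2:
  fixes M :: "'z measure" and m :: "'p::euclidean_space \<Rightarrow> 'z \<Rightarrow> real"
    and \<theta> :: 'p and f :: "'z \<Rightarrow> 'y" and ystar :: 'y and N :: nat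
    and s :: "'z \<Rightarrow> 'p"
  defines "A \<equiv> {z \<in> space M. f z = ystar}"
  defines "p \<equiv> (\<lambda>t. \<integral>z. indicator A z * m t z \<partial>M)"
  defines "P \<equiv> PiM {..<N} (\<lambda>_. density M (\<lambda>z. ennreal (m \<theta> z)))"
  assumes N: "N \<ge> 1"
    and m_meas: "\<And>t. m t \<in> borel_measurable M"
    and m_pos: "\<And>t z. z \<in> space M \<Longrightarrow> 0 < m t z"
    and m_int: "\<And>t. integrable M (m t)"
    and m_norm: "\<And>t. (\<integral>z. m t z \<partial>M) = 1"
    and A_meas: "A \<in> sets M"
    and s_meas: "s \<in> borel_measurable M"
    and score: "\<And>z. z \<in> space M \<Longrightarrow> ((\<lambda>t. ln (m t z)) has_derivative (\<lambda>h. s z \<bullet> h)) (at \<theta>)"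
    and interch_int: "integrable M (\<lambda>z. (indicator A z * m \<theta> z) *\<^sub>R s z)"
    and interch: "(p has_derivative (\<lambda>h. (\<integral>z. (indicator A z * m \<theta> z) *\<^sub>R s z \<partial>M) \<bullet> h)) (at \<theta>)"
    and p_pos: "p \<theta> > 0"
  shows "integrable P (ghat N f ystar s)
    \<and> ((\<lambda>t. J_trunc N (p t)) has_derivative (\<lambda>h. (\<integral>\<omega>. ghat N f ystar s \<omega> \<partial>P) \<bullet> h)) (at \<theta>)
    \<and> (\<exists>G. (\<forall>k\<in>{1..N}. ((\<lambda>t. pass_at k (p t)) has_derivative (\<lambda>h. G k \<bullet> h)) (at \<theta>))
           \<and> (\<integral>\<omega>. ghat N f ystar s \<omega> \<partial>P) = (\<Sum>k=1..N. (1 / real k) *\<^sub>R G k))"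
proof -
  define g where "g = (\<integral>z. (indicator A z * m \<theta> z) *\<^sub>R s z \<partial>M)"
  define q where "q = (\<Sum>k<N. (1 - p \<theta>) ^ k)"
  have "has_bochner_integral P (ghat N f ystar s) (q *\<^sub>R g)"
    unfolding P_def q_def g_def p_def A_def
    using m_meas m_pos m_int m_norm A_meas s_meas interch_int p_pos
    by (intro has_bochner_integral_ghat_density) (auto simp: A_def p_def less_imp_le)
  then have integrable: "integrable P (ghat N f ystar s)"
    and expectation: "(\<integral>\<omega>. ghat N f ystar s \<omega> \<partial>P) = q *\<^sub>R g"
    by (simp_all add: has_bochner_integral_iff)
  have grad_p: "(p has_derivative (\<lambda>h. g \<bullet> h)) (at \<theta>)"
    using interch unfolding g_def .
  have J: "((\<lambda>t. J_trunc N (p t)) has_derivative (\<lambda>h. (q *\<^sub>R g) \<bullet> h)) (at \<theta>)"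
    unfolding q_def by (rule has_derivative_real_compose_inner[OF grad_p has_real_derivative_J_trunc])
  define G where "G k = (real k * (1 - p \<theta>) ^ (k - 1)) *\<^sub>R g" for k
  have pass: "((\<lambda>t. pass_at k (p t)) has_derivative (\<lambda>h. G k \<bullet> h)) (at \<theta>)" for k
    unfolding G_def by (rule has_derivative_real_compose_inner[OF grad_p has_real_derivative_pass_at])
  have "(\<Sum>k=1..N. (1 / real k) *\<^sub>R G k) = q *\<^sub>R g"
    by (simp add: G_def q_def scaleR_sum_left sum.atLeast1_atMost_eq)
  then show ?thesis
    using integrable expectation J pass by (auto intro!: exI[of _ G])
qed

end
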